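(* Let $\Phi$ be an irreducible reduced root system with basis $\Delta$, Weyl group $W$ with length function $l$, highest root $\tilde\alpha$. For every positive long root $\alpha$, $x_{-\alpha}=s_\alpha x_\alpha$ and $l(x_{-\alpha})=l(s_\alpha x_\alpha)=l(s_\alpha)+l(x_\alpha)$.
   Context: Long roots are those of maximal length for a $W$-invariant scalar product $(\cdot|\cdot)$. $\tilde I=\{\alpha\in\Delta:(\tilde\alpha|\alpha)=0\}$, $\Phi_{\tilde I}^+$ the positive roots in the span of $\tilde I$, $X_{\tilde I}=\{w\in W:w(\Phi^+_{\tilde I})\subset\Phi^+\}$; for a long root $\beta$, $x_\beta$ is the unique element of $X_{\tilde I}$ with $x_\beta(\tilde\alpha)=\beta$. *)

theory Defs
  imports "HOL-Analysis.Analysis"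
begin

text \<open>Root systems in a finite-dimensional real inner product space 'a.
  The ambient inner product is the W-invariant scalar product.\<close>

definition refl :: "'a::euclidean_space \<Rightarrow> 'a \<Rightarrow> 'a" where
  "refl \<alpha> x = x - (2 * (x \<bullet> \<alpha>) / (\<alpha> \<bullet> \<alpha>)) *\<^sub>R \<alpha>"

definition root_system :: "'a::euclidean_space set \<Rightarrow> bool" where
  "root_system \<Phi> \<longleftrightarrow> finite \<Phi> \<and> 0 \<notin> \<Phi> \<and> span \<Phi> = UNIV \<and>
     (\<forall>\<alpha>\<in>\<Phi>. refl \<alpha> ` \<Phi> = \<Phi>) \<and>
     (\<forall>\<alpha>\<in>\<Phi>. \<forall>\<beta>\<in>\<Phi>. 2 * (\<beta> \<bullet> \<alpha>) / (\<alpha> \<bullet> \<alpha>) \<in> \<int>)"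

definition reduced :: "'a::euclidean_space set \<Rightarrow> bool" where
  "reduced \<Phi> \<longleftrightarrow> (\<forall>\<alpha>\<in>\<Phi>. \<forall>c::real. c *\<^sub>R \<alpha> \<in> \<Phi> \<longrightarrow> c = 1 \<or> c = -1)"

definition irreducible_rs :: "'a::euclidean_space set \<Rightarrow> bool" where
  "irreducible_rs \<Phi> \<longleftrightarrow> \<Phi> \<noteq> {} \<and>
     \<not> (\<exists>A B. A \<union> B = \<Phi> \<and> A \<inter> B = {} \<and> A \<noteq> {} \<and> B \<noteq> {} \<and>
            (\<forall>a\<in>A. \<forall>b\<in>B. a \<bullet> b = 0))"

definition root_basis :: "'a::euclidean_space set \<Rightarrow> 'a set \<Rightarrow> bool" where
  "root_basis \<Phi> \<Delta> \<longleftrightarrow> \<Delta> \<subseteq> \<Phi> \<and> independent \<Delta> \<and> span \<Delta> = span \<Phi> \<and>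
     (\<forall>\<beta>\<in>\<Phi>. \<exists>c::'a \<Rightarrow> int. ((\<forall>d\<in>\<Delta>. c d \<ge> 0) \<or> (\<forall>d\<in>\<Delta>. c d \<le> 0)) \<and>
                 \<beta> = (\<Sum>d\<in>\<Delta>. of_int (c d) *\<^sub>R d))"

definition nonneg_comb :: "'a::euclidean_space set \<Rightarrow> 'a \<Rightarrow> bool" where
  "nonneg_comb \<Delta> v \<longleftrightarrow> (\<exists>c::'a \<Rightarrow> real. (\<forall>d\<in>\<Delta>. c d \<ge> 0) \<and> v = (\<Sum>d\<in>\<Delta>. c d *\<^sub>R d))"

definition pos_roots :: "'a::euclidean_space set \<Rightarrow> 'a set \<Rightarrow> 'a set" where
  "pos_roots \<Phi> \<Delta> = {\<beta>\<in>\<Phi>. nonneg_comb \<Delta> \<beta>}"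

definition highest_root :: "'a::euclidean_space set \<Rightarrow> 'a set \<Rightarrow> 'a \<Rightarrow> bool" where
  "highest_root \<Phi> \<Delta> h \<longleftrightarrow> h \<in> \<Phi> \<and> (\<forall>\<beta>\<in>\<Phi>. nonneg_comb \<Delta> (h - \<beta>))"

definition long_root :: "'a::euclidean_space set \<Rightarrow> 'a \<Rightarrow> bool" where
  "long_root \<Phi> \<beta> \<longleftrightarrow> \<beta> \<in> \<Phi> \<and> (\<forall>\<gamma>\<in>\<Phi>. \<gamma> \<bullet> \<gamma> \<le> \<beta> \<bullet> \<beta>)"

inductive_set weyl_group :: "'a::euclidean_space set \<Rightarrow> ('a \<Rightarrow> 'a) set" for \<Phi> where
  id: "id \<in> weyl_group \<Phi>"
| step: "\<alpha> \<in> \<Phi> \<Longrightarrow> w \<in> weyl_group \<Phi> \<Longrightarrow> refl \<alpha> \<circ> w \<in> weyl_group \<Phi>"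

definition wlen :: "'a::euclidean_space set \<Rightarrow> ('a \<Rightarrow> 'a) \<Rightarrow> nat" where
  "wlen \<Delta> w = (LEAST n. \<exists>ds. set ds \<subseteq> \<Delta> \<and> length ds = n \<and>
                        w = foldr (\<lambda>d f. refl d \<circ> f) ds id)"

definition I_tilde :: "'a::euclidean_space set \<Rightarrow> 'a \<Rightarrow> 'a set" where
  "I_tilde \<Delta> h = {\<alpha>\<in>\<Delta>. h \<bullet> \<alpha> = 0}"

definition pos_roots_I :: "'a::euclidean_space set \<Rightarrow> 'a set \<Rightarrow> 'a \<Rightarrow> 'a set" where
  "pos_roots_I \<Phi> \<Delta> h = pos_roots \<Phi> \<Delta> \<inter> span (I_tilde \<Delta> h)"

definition X_I :: "'a::euclidean_space set \<Rightarrow> 'a set \<Rightarrow> 'a \<Rightarrow> ('a \<Rightarrow> 'a) set" where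
  "X_I \<Phi> \<Delta> h = {w \<in> weyl_group \<Phi>. w ` pos_roots_I \<Phi> \<Delta> h \<subseteq> pos_roots \<Phi> \<Delta>}"

definition x_root :: "'a::euclidean_space set \<Rightarrow> 'a set \<Rightarrow> 'a \<Rightarrow> 'a \<Rightarrow> ('a \<Rightarrow> 'a)" where
  "x_root \<Phi> \<Delta> h \<beta> = (THE w. w \<in> X_I \<Phi> \<Delta> h \<and> w h = \<beta>)"

end

theory Submission
  imports Defs
begin

text \<open>Write \<open>x = x\<^sub>\<alpha>\<close> and \<open>s = refl \<alpha>\<close>. Since \<open>x h = \<alpha>\<close>, \<open>s x\<close> maps \<open>h\<close> to
  \<open>-\<alpha>\<close>, and it still lies in \<open>X\<^sub>I\<close>: the roots of \<open>\<Phi>\<^sub>I\<close> are orthogonal to \<open>h\<close>, so \<open>x\<close>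
  maps them to roots orthogonal to \<open>\<alpha>\<close>, which \<open>s\<close> fixes. As the elements of \<open>X\<^sub>I\<close> are
  determined by their value at the dominant vector \<open>h\<close>, \<open>x\<^sub>-\<^sub>\<alpha> = s x\<close>.

  For the lengths, \<open>l(w)\<close> is the number of positive roots that \<open>w\<close> makes negative. The
  inversions of \<open>s x\<close> contain those of \<open>x\<close> and, disjointly, the images under \<open>x\<inverse>\<close> of
  those of \<open>s\<close>: if \<open>\<gamma> > 0\<close> and \<open>s \<gamma> < 0\<close>, then \<open>(x\<inverse>\<gamma> | h) = (\<gamma> | \<alpha>) > 0\<close>, so
  \<open>x\<inverse>\<gamma>\<close> is positive. Hence \<open>l(s x) \<ge> l(s) + l(x)\<close>, and subadditivity gives equality.\<close>

section \<open>Reflections and words in simple reflections\<close>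

lemma refl_linear: "linear (refl a)"
  by (intro linearI)
    (simp_all add: refl_def inner_add_left algebra_simps add_divide_distrib scaleR_add_left)

lemma refl_inner: "a \<noteq> 0 \<Longrightarrow> refl a x \<bullet> refl a y = x \<bullet> y"
  by (simp add: refl_def inner_diff_left inner_diff_right algebra_simps inner_commute
      power2_eq_square field_simps)

lemma refl_refl: "a \<noteq> 0 \<Longrightarrow> refl a (refl a x) = x"
  by (simp add: refl_def inner_diff_left algebra_simps field_simps)

lemma refl_self: "a \<noteq> 0 \<Longrightarrow> refl a a = - a"
  by (simp add: refl_def scaleR_2)

lemma refl_uminus: "refl (- a) = refl a"
  by (auto simp: refl_def fun_eq_iff)

lemma refl_orthogonal: "x \<bullet> a = 0 \<Longrightarrow> refl a x = x"
  by (simp add: refl_def)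

lemma refl_conjugate:
  assumes "linear w" "\<And>x y. w x \<bullet> w y = x \<bullet> y"
  shows "refl (w d) (w x) = w (refl d x)"
  using assms by (simp add: refl_def linear_diff linear_scale)

definition wprod :: "'a::euclidean_space list \<Rightarrow> 'a \<Rightarrow> 'a" where
  "wprod ds = foldr (\<lambda>d f. refl d \<circ> f) ds id"

lemma wprod_Nil [simp]: "wprod [] = id"
  by (simp add: wprod_def)

lemma wprod_Cons [simp]: "wprod (d # ds) = refl d \<circ> wprod ds"
  by (simp add: wprod_def)

lemma wprod_append: "wprod (xs @ ys) = wprod xs \<circ> wprod ys"
  by (induction xs) (auto simp: comp_assoc)

lemma wlen_wprod: "wlen \<Delta> w = (LEAST n. \<exists>ds. set ds \<subseteq> \<Delta> \<and> length ds = n \<and> w = wprod ds)"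
  by (simp add: wlen_def wprod_def)

lemma wlen_le_length: "set ds \<subseteq> \<Delta> \<Longrightarrow> wlen \<Delta> (wprod ds) \<le> length ds"
  unfolding wlen_wprod by (rule Least_le) blast

lemma reduced_word_exists:
  "set ds \<subseteq> \<Delta> \<Longrightarrow> w = wprod ds \<Longrightarrow> \<exists>es. set es \<subseteq> \<Delta> \<and> length es = wlen \<Delta> w \<and> w = wprod es"
  unfolding wlen_wprod by (rule LeastI_ex) blast

section \<open>Coordinates and positive roots\<close>

locale based_root_system =
  fixes \<Phi> \<Delta> :: "'a::euclidean_space set"
  assumes root_system: "root_system \<Phi>" and reduced: "reduced \<Phi>" and basis: "root_basis \<Phi> \<Delta>"
begin

abbreviation "P \<equiv> pos_roots \<Phi> \<Delta>"
abbreviation "W \<equiv> weyl_group \<Phi>"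

lemma finite_roots: "finite \<Phi>" and zero_not_root: "0 \<notin> \<Phi>"
  and refl_root: "\<alpha> \<in> \<Phi> \<Longrightarrow> \<beta> \<in> \<Phi> \<Longrightarrow> refl \<alpha> \<beta> \<in> \<Phi>"
  using root_system unfolding root_system_def by blast+

lemma simple_roots: "\<Delta> \<subseteq> \<Phi>" and independent_simple: "independent \<Delta>"
  and span_simple: "span \<Delta> = UNIV"
  using basis root_system unfolding root_basis_def root_system_def by auto

lemma finite_simple: "finite \<Delta>"
  using simple_roots finite_roots finite_subset by blast

lemma simple_root: "d \<in> \<Delta> \<Longrightarrow> d \<in> \<Phi>"
  using simple_roots by blast

lemma root_nonzero: "\<alpha> \<in> \<Phi> \<Longrightarrow> \<alpha> \<noteq> 0"
  using zero_not_root by auto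

lemma root_inner_self_pos: "\<alpha> \<in> \<Phi> \<Longrightarrow> 0 < \<alpha> \<bullet> \<alpha>"
  using root_nonzero by simp

lemma uminus_root: "\<beta> \<in> \<Phi> \<Longrightarrow> - \<beta> \<in> \<Phi>"
  using refl_root[of \<beta> \<beta>] refl_self[OF root_nonzero] by auto

definition coord :: "'a \<Rightarrow> 'a \<Rightarrow> real" where
  "coord e = (SOME g. linear g \<and> (\<forall>x\<in>\<Delta>. g x = (if x = e then 1 else 0)))"

lemma coord_spec: "linear (coord e) \<and> (\<forall>x\<in>\<Delta>. coord e x = (if x = e then 1 else 0))"
  unfolding coord_def
  using linear_independent_extend[OF independent_simple, of "\<lambda>x. if x = e then 1 else 0"]
  by (rule someI_ex)

lemma coord_linear: "linear (coord e)"
  using coord_spec by blast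

lemma coord_simple: "d \<in> \<Delta> \<Longrightarrow> coord e d = (if d = e then 1 else 0)"
  using coord_spec by blast

lemmas coord_diff = linear_diff[OF coord_linear] and coord_scale = linear_scale[OF coord_linear]
  and coord_uminus = linear_neg[OF coord_linear]

lemma coord_sum: "coord e (\<Sum>d\<in>\<Delta>. c d *\<^sub>R d) = (if e \<in> \<Delta> then c e else 0)"
  using finite_simple
  by (simp add: linear_sum[OF coord_linear] linear_scale[OF coord_linear] coord_simple
      if_distrib[of "\<lambda>x. _ * x"] cong: if_cong)

lemma coord_expansion: "v = (\<Sum>d\<in>\<Delta>. coord d v *\<^sub>R d)"
proof -
  have "linear (\<lambda>v. \<Sum>d\<in>\<Delta>. coord d v *\<^sub>R d)"
    by (intro linearI) (simp_all add: linear_add[OF coord_linear] coord_scale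
        scaleR_add_left sum.distrib scaleR_sum_right)
  then have "id v = (\<Sum>d\<in>\<Delta>. coord d v *\<^sub>R d)"
    by (rule linear_eq_on_span[OF linear_id _ _ _, of _ \<Delta>])
      (use finite_simple span_simple in
        \<open>simp_all add: coord_simple if_distrib[of "\<lambda>c. c *\<^sub>R _"] cong: if_cong\<close>)
  then show ?thesis by simp
qed

lemma coord_eqI: "(\<And>e. e \<in> \<Delta> \<Longrightarrow> coord e v = coord e w) \<Longrightarrow> v = w"
  using coord_expansion[of v] coord_expansion[of w] by (metis (no_types, lifting) sum.cong)

lemma inner_coord_expansion: "x \<bullet> v = (\<Sum>e\<in>\<Delta>. coord e v * (x \<bullet> e))"
  by (subst coord_expansion[of v]) (simp add: inner_sum_right)

lemma root_coord_sign: "\<beta> \<in> \<Phi> \<Longrightarrow> (\<forall>e\<in>\<Delta>. coord e \<beta> \<ge> 0) \<or> (\<forall>e\<in>\<Delta>. coord e \<beta> \<le> 0)"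
proof -
  assume "\<beta> \<in> \<Phi>"
  then obtain c :: "'a \<Rightarrow> int" where c: "(\<forall>d\<in>\<Delta>. c d \<ge> 0) \<or> (\<forall>d\<in>\<Delta>. c d \<le> 0)"
    and \<beta>: "\<beta> = (\<Sum>d\<in>\<Delta>. of_int (c d) *\<^sub>R d)"
    using basis unfolding root_basis_def by blast
  have "\<forall>e\<in>\<Delta>. coord e \<beta> = of_int (c e)"
    unfolding \<beta> coord_sum by simp
  then show ?thesis using c by auto
qed

lemma nonneg_comb_iff_coord: "nonneg_comb \<Delta> v \<longleftrightarrow> (\<forall>e\<in>\<Delta>. coord e v \<ge> 0)"
proof
  assume "nonneg_comb \<Delta> v"
  then obtain c where c: "\<forall>d\<in>\<Delta>. c d \<ge> 0" and v: "v = (\<Sum>d\<in>\<Delta>. c d *\<^sub>R d)"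
    unfolding nonneg_comb_def by blast
  show "\<forall>e\<in>\<Delta>. coord e v \<ge> 0"
    unfolding v coord_sum using c by simp
next
  assume "\<forall>e\<in>\<Delta>. coord e v \<ge> 0"
  then show "nonneg_comb \<Delta> v"
    unfolding nonneg_comb_def by (intro exI[of _ "\<lambda>d. coord d v"] conjI coord_expansion)
qed

lemma pos_roots_iff: "\<beta> \<in> P \<longleftrightarrow> \<beta> \<in> \<Phi> \<and> (\<forall>e\<in>\<Delta>. 0 \<le> coord e \<beta>)"
  by (simp add: pos_roots_def nonneg_comb_iff_coord)

lemma pos_root: "\<beta> \<in> P \<Longrightarrow> \<beta> \<in> \<Phi>"
  by (simp add: pos_roots_iff)

lemma uminus_pos_root: "\<beta> \<in> \<Phi> \<Longrightarrow> \<beta> \<notin> P \<Longrightarrow> - \<beta> \<in> P"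
  using root_coord_sign[of \<beta>] uminus_root[of \<beta>] by (auto simp: pos_roots_iff coord_uminus)

lemma uminus_not_pos_root: "\<beta> \<in> P \<Longrightarrow> - \<beta> \<notin> P"
proof
  assume pos: "\<beta> \<in> P" "- \<beta> \<in> P"
  then have "\<beta> = 0"
    by (intro coord_eqI) (auto simp: pos_roots_iff coord_uminus linear_0[OF coord_linear] intro: order_antisym)
  then show False using pos root_nonzero by (auto simp: pos_roots_iff)
qed

lemma simple_pos_root: "d \<in> \<Delta> \<Longrightarrow> d \<in> P"
  using simple_roots by (auto simp: pos_roots_iff coord_simple)

lemma simple_refl_pos_root:
  assumes d: "d \<in> \<Delta>" and \<beta>: "\<beta> \<in> P" "\<beta> \<noteq> d"
  shows "refl d \<beta> \<in> P \<and> refl d \<beta> \<noteq> d"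
proof -
  have \<beta>_root: "\<beta> \<in> \<Phi>" and d_root: "d \<in> \<Phi>" using \<beta> d by (auto simp: pos_root simple_root)
  have "\<exists>e\<in>\<Delta>. e \<noteq> d \<and> coord e \<beta> > 0"
  proof (rule ccontr)
    assume "\<not> ?thesis"
    then have "\<forall>e\<in>\<Delta>. e \<noteq> d \<longrightarrow> coord e \<beta> = 0" using \<beta> by (force simp: pos_roots_iff)
    then have multiple: "\<beta> = coord d \<beta> *\<^sub>R d"
      by (intro coord_eqI) (use d in \<open>auto simp: coord_scale coord_simple\<close>)
    then have "coord d \<beta> = 1 \<or> coord d \<beta> = -1"
      using reduced \<beta>_root d_root unfolding reduced_def by metis
    moreover have "coord d \<beta> \<ge> 0" using \<beta> d by (simp add: pos_roots_iff)
    ultimately have "\<beta> = d" using multiple by auto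
    then show False using \<beta> by simp
  qed
  then obtain e where e: "e \<in> \<Delta>" "e \<noteq> d" "coord e \<beta> > 0" by blast
  have r: "refl d \<beta> \<in> \<Phi>" using refl_root d_root \<beta>_root by blast
  text \<open>A simple reflection changes only the \<open>d\<close>-coordinate, so \<open>refl d \<beta>\<close> keeps
    the positive coordinate at \<open>e\<close>.\<close>
  have "coord e (refl d \<beta>) = coord e \<beta>"
    using e d by (simp add: refl_def coord_diff coord_scale coord_simple)
  then have "refl d \<beta> \<in> P" using root_coord_sign[OF r] e r by (force simp: pos_roots_iff)
  moreover have "refl d \<beta> \<noteq> d"
  proof
    assume "refl d \<beta> = d"
    then have "\<beta> = - d"
      using refl_refl[OF root_nonzero[OF d_root], of \<beta>] refl_self[OF root_nonzero[OF d_root]] by simp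
    then show False using \<beta> uminus_not_pos_root simple_pos_root d by blast
  qed
  ultimately show ?thesis by blast
qed

section \<open>The Weyl group and inversion sets\<close>

lemma refl_in_weyl_group: "\<alpha> \<in> \<Phi> \<Longrightarrow> refl \<alpha> \<in> W"
  using weyl_group.step[OF _ weyl_group.id] by simp

lemma weyl_group_isometry:
  "w \<in> W \<Longrightarrow> linear w \<and> (\<forall>x y. w x \<bullet> w y = x \<bullet> y) \<and> (\<forall>\<beta>\<in>\<Phi>. w \<beta> \<in> \<Phi>)"
proof (induction rule: weyl_group.induct)
  case id
  then show ?case using linear_id by (simp add: id_def)
next
  case (step \<alpha> w)
  have "linear (refl \<alpha> \<circ> w)" using step.IH linear_compose refl_linear by blast
  with step show ?case using refl_inner[OF root_nonzero[OF step(1)]] refl_root by (simp add: o_def)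
qed

lemma weyl_linear: "w \<in> W \<Longrightarrow> linear w"
  and weyl_inner: "w \<in> W \<Longrightarrow> w x \<bullet> w y = x \<bullet> y"
  and weyl_root: "w \<in> W \<Longrightarrow> \<beta> \<in> \<Phi> \<Longrightarrow> w \<beta> \<in> \<Phi>"
  using weyl_group_isometry by blast+

lemma weyl_uminus: "w \<in> W \<Longrightarrow> w (- x) = - w x"
  using weyl_linear linear_neg by blast

lemma weyl_comp: "w1 \<in> W \<Longrightarrow> w2 \<in> W \<Longrightarrow> w1 \<circ> w2 \<in> W"
  by (induction rule: weyl_group.induct) (auto simp: comp_assoc intro: weyl_group.step)

lemma weyl_inverse: "w \<in> W \<Longrightarrow> \<exists>v\<in>W. (\<forall>x. v (w x) = x) \<and> (\<forall>x. w (v x) = x)"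
proof (induction rule: weyl_group.induct)
  case id
  then show ?case using weyl_group.id by (intro bexI[of _ id]) auto
next
  case (step \<alpha> w)
  then obtain v where v: "v \<in> W" "\<forall>x. v (w x) = x" "\<forall>x. w (v x) = x" by blast
  then have "v \<circ> refl \<alpha> \<in> W" using weyl_comp refl_in_weyl_group step(1) by blast
  with v show ?case using refl_refl[OF root_nonzero[OF step(1)]] by (intro bexI[of _ "v \<circ> refl \<alpha>"]) auto
qed

lemma weyl_pos_or_neg: "w \<in> W \<Longrightarrow> \<beta> \<in> \<Phi> \<Longrightarrow> w \<beta> \<notin> P \<Longrightarrow> - w \<beta> \<in> P"
  using uminus_pos_root weyl_root by blast

definition inversions :: "('a \<Rightarrow> 'a) \<Rightarrow> 'a set" where
  "inversions w = {\<beta>\<in>P. w \<beta> \<notin> P}"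

definition n_inversions :: "('a \<Rightarrow> 'a) \<Rightarrow> nat" where
  "n_inversions w = card (inversions w)"

lemma finite_pos_roots: "finite P"
  using finite_roots by (rule finite_subset[rotated]) (auto simp: pos_roots_def)

lemma finite_inversions: "finite (inversions w)"
  using finite_pos_roots by (rule finite_subset[rotated]) (auto simp: inversions_def)

lemma inversions_comp_simple_refl:
  assumes w: "w \<in> W" and d: "d \<in> \<Delta>"
  shows "inversions (w \<circ> refl d) = refl d ` (inversions w - {d}) \<union> (if w d \<in> P then {d} else {})"
proof -
  have d_root: "d \<in> \<Phi>" and d_pos: "d \<in> P" using d by (auto simp: simple_root simple_pos_root)
  have rr: "\<And>x. refl d (refl d x) = x" and rd: "refl d d = - d"
    using refl_refl refl_self root_nonzero[OF d_root] by auto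
  show ?thesis
  proof (intro set_eqI iffI)
    fix \<beta> assume "\<beta> \<in> inversions (w \<circ> refl d)"
    then have \<beta>: "\<beta> \<in> P" "w (refl d \<beta>) \<notin> P" by (auto simp: inversions_def)
    show "\<beta> \<in> refl d ` (inversions w - {d}) \<union> (if w d \<in> P then {d} else {})"
    proof (cases "\<beta> = d")
      case True
      then show ?thesis using \<beta>(2) rd weyl_uminus[OF w] weyl_pos_or_neg[OF w d_root] by auto
    next
      case False
      then have "refl d \<beta> \<in> inversions w - {d}"
        using simple_refl_pos_root[OF d \<beta>(1)] \<beta>(2) by (simp add: inversions_def)
      then show ?thesis using rr by (metis UnI1 image_eqI)
    qed
  next
    fix \<beta> assume "\<beta> \<in> refl d ` (inversions w - {d}) \<union> (if w d \<in> P then {d} else {})"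
    then show "\<beta> \<in> inversions (w \<circ> refl d)"
    proof
      assume "\<beta> \<in> refl d ` (inversions w - {d})"
      then obtain \<gamma> where "\<gamma> \<in> P" "\<gamma> \<noteq> d" "w \<gamma> \<notin> P" "\<beta> = refl d \<gamma>"
        by (auto simp: inversions_def)
      then show ?thesis using simple_refl_pos_root[OF d] rr by (auto simp: inversions_def)
    next
      assume "\<beta> \<in> (if w d \<in> P then {d} else {})"
      then show ?thesis
        using d_pos rd weyl_uminus[OF w] uminus_not_pos_root
        by (auto simp: inversions_def split: if_splits)
    qed
  qed
qed

lemma n_inversions_comp_simple_refl:
  assumes w: "w \<in> W" and d: "d \<in> \<Delta>"
  shows "n_inversions (w \<circ> refl d) = (if w d \<in> P then n_inversions w + 1 else n_inversions w - 1)"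
proof -
  have "refl d (refl d x) = x" for x
    using refl_refl root_nonzero[OF simple_root[OF d]] by auto
  then have inj: "inj_on (refl d) X" for X by (metis inj_onI)
  have "d \<notin> refl d ` (inversions w - {d})"
    using simple_refl_pos_root[OF d] by (force simp: inversions_def)
  moreover have "d \<in> inversions w \<longleftrightarrow> w d \<notin> P"
    using simple_pos_root[OF d] by (simp add: inversions_def)
  ultimately show ?thesis
    unfolding n_inversions_def inversions_comp_simple_refl[OF w d]
    using finite_inversions card_image[OF inj]
    by (subst card_Un_disjoint) (auto simp: card_Diff_singleton_if)
qed

lemma n_inversions_pos: "w \<in> W \<Longrightarrow> d \<in> \<Delta> \<Longrightarrow> w d \<notin> P \<Longrightarrow> 0 < n_inversions w"
  unfolding n_inversions_def using simple_pos_root finite_inversions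
  by (metis (mono_tags, lifting) card_gt_0_iff empty_iff inversions_def mem_Collect_eq)

lemma wprod_in_weyl_group: "set ds \<subseteq> \<Delta> \<Longrightarrow> wprod ds \<in> W"
  by (induction ds) (auto simp: simple_root intro: weyl_group.intros)

lemma wprod_rev_inverse: "set ds \<subseteq> \<Delta> \<Longrightarrow> wprod ds (wprod (rev ds) x) = x"
  by (induction ds arbitrary: x) (auto simp: wprod_append refl_refl root_nonzero simple_root)

lemma wprod_comp_simple_refl_deletion:
  assumes "set ds \<subseteq> \<Delta>" "d \<in> \<Delta>" "wprod ds d \<notin> P"
  shows "\<exists>i<length ds. wprod ds \<circ> refl d = wprod (take i ds @ drop (Suc i) ds)"
  using assms
proof (induction ds)
  case Nil
  then show ?case using simple_pos_root by simp
next
  case (Cons e es)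
  have e: "e \<in> \<Delta>" and es: "set es \<subseteq> \<Delta>" using Cons by auto
  show ?case
  proof (cases "wprod es d \<in> P")
    case False
    then obtain i where "i < length es" "wprod es \<circ> refl d = wprod (take i es @ drop (Suc i) es)"
      using Cons es by blast
    then show ?thesis by (intro exI[of _ "Suc i"]) (simp add: fun_eq_iff)
  next
    case True
    text \<open>Only \<open>e\<close> itself is sent to a negative root by \<open>refl e\<close>, so \<open>wprod es\<close>
      conjugates \<open>refl d\<close> into \<open>refl e\<close> and the first letter cancels.\<close>
    have "wprod es d = e"
      using Cons.prems(3) simple_refl_pos_root[OF e True] by auto
    then have "refl e (wprod es x) = wprod es (refl d x)" for x
      using refl_conjugate[of "wprod es" d x] weyl_linear weyl_inner wprod_in_weyl_group[OF es]
      by simp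
    then have "wprod (e # es) \<circ> refl d = wprod es"
      using refl_refl[OF root_nonzero[OF simple_root[OF Cons.prems(2)]]] by (simp add: fun_eq_iff)
    then show ?thesis by (intro exI[of _ 0]) (simp add: fun_eq_iff)
  qed
qed

lemma reduced_word_butlast:
  assumes "set (ds @ [d]) \<subseteq> \<Delta>" "wlen \<Delta> (wprod (ds @ [d])) = length (ds @ [d])"
  shows "wlen \<Delta> (wprod ds) = length ds"
proof (rule ccontr)
  have ds: "set ds \<subseteq> \<Delta>" using assms(1) by simp
  assume "wlen \<Delta> (wprod ds) \<noteq> length ds"
  then have shorter: "wlen \<Delta> (wprod ds) < length ds" using wlen_le_length[OF ds] by simp
  obtain es where es: "set es \<subseteq> \<Delta>" "length es = wlen \<Delta> (wprod ds)" "wprod ds = wprod es"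
    using reduced_word_exists[OF ds refl] by blast
  then have "wprod (ds @ [d]) = wprod (es @ [d])" by (simp add: wprod_append)
  then have "wlen \<Delta> (wprod (ds @ [d])) \<le> length (es @ [d])"
    using wlen_le_length[of "es @ [d]"] es(1) assms(1) by simp
  then show False using assms(2) shorter es(2) by simp
qed

lemma reduced_word_last_pos:
  assumes "set (ds @ [d]) \<subseteq> \<Delta>" "wlen \<Delta> (wprod (ds @ [d])) = length (ds @ [d])"
  shows "wprod ds d \<in> P"
proof (rule ccontr)
  have ds: "set ds \<subseteq> \<Delta>" and d: "d \<in> \<Delta>" using assms(1) by auto
  assume "wprod ds d \<notin> P"
  then obtain i where i: "i < length ds" "wprod ds \<circ> refl d = wprod (take i ds @ drop (Suc i) ds)"
    using wprod_comp_simple_refl_deletion[OF ds d] by blast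
  have "set (take i ds @ drop (Suc i) ds) \<subseteq> \<Delta>"
    using ds by (auto dest: in_set_takeD in_set_dropD)
  then have "wlen \<Delta> (wprod (ds @ [d])) \<le> length (take i ds @ drop (Suc i) ds)"
    using wlen_le_length i(2) by (metis wprod_append wprod_Cons wprod_Nil comp_id)
  then show False using assms(2) i(1) by simp
qed

lemma n_inversions_reduced_word:
  "set ds \<subseteq> \<Delta> \<Longrightarrow> wlen \<Delta> (wprod ds) = length ds \<Longrightarrow> n_inversions (wprod ds) = length ds"
proof (induction ds rule: rev_induct)
  case Nil
  then show ?case by (simp add: n_inversions_def inversions_def)
next
  case (snoc d ds)
  then have "n_inversions (wprod ds) = length ds" and "wprod ds d \<in> P"
    using reduced_word_butlast reduced_word_last_pos by auto
  then show ?case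
    using n_inversions_comp_simple_refl[of "wprod ds" d] wprod_in_weyl_group snoc.prems(1)
    by (simp add: wprod_append o_def)
qed

section \<open>Length equals the number of inversions\<close>

definition height :: "'a \<Rightarrow> real" where
  "height v = (\<Sum>e\<in>\<Delta>. coord e v)"

lemma height_linear: "linear height"
  unfolding height_def
  by (intro linearI) (simp_all add: linear_add[OF coord_linear] coord_scale sum.distrib sum_distrib_left)

lemma height_simple: "d \<in> \<Delta> \<Longrightarrow> height d = 1"
  unfolding height_def using finite_simple by (simp add: coord_simple)

lemma height_simple_refl: "d \<in> \<Delta> \<Longrightarrow> height (refl d x) = height x - 2 * (x \<bullet> d) / (d \<bullet> d)"
  by (simp add: refl_def linear_diff[OF height_linear] linear_scale[OF height_linear] height_simple)

lemma pos_root_height_descent: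
  assumes \<beta>: "\<beta> \<in> P" "\<beta> \<notin> \<Delta>"
  shows "\<exists>d\<in>\<Delta>. refl d \<beta> \<in> P \<and> height (refl d \<beta>) < height \<beta>"
proof -
  have \<beta>_root: "\<beta> \<in> \<Phi>" and nonneg: "\<forall>e\<in>\<Delta>. 0 \<le> coord e \<beta>" using \<beta> by (auto simp: pos_roots_iff)
  have "0 < (\<Sum>e\<in>\<Delta>. coord e \<beta> * (\<beta> \<bullet> e))"
    using root_inner_self_pos[OF \<beta>_root] inner_coord_expansion[of \<beta> \<beta>] by simp
  then obtain d where d: "d \<in> \<Delta>" "0 < coord d \<beta> * (\<beta> \<bullet> d)"
    using sum_nonpos[of \<Delta> "\<lambda>e. coord e \<beta> * (\<beta> \<bullet> e)"] by (meson not_le)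
  then have "\<beta> \<bullet> d > 0" using nonneg by (auto simp: zero_less_mult_iff)
  then have "height (refl d \<beta>) < height \<beta>"
    using root_inner_self_pos[OF simple_root[OF d(1)]] by (simp add: height_simple_refl[OF d(1)])
  moreover have "refl d \<beta> \<in> P"
    using simple_refl_pos_root[OF d(1) \<beta>(1)] \<beta>(2) d(1) by auto
  ultimately show ?thesis using d(1) by blast
qed

lemma pos_root_conjugate_simple: "\<beta> \<in> P \<Longrightarrow> \<exists>ds d. set ds \<subseteq> \<Delta> \<and> d \<in> \<Delta> \<and> \<beta> = wprod ds d"
proof (induction "card {\<gamma>\<in>\<Phi>. height \<gamma> < height \<beta>}" arbitrary: \<beta> rule: less_induct)
  case less
  show ?case
  proof (cases "\<beta> \<in> \<Delta>")
    case True
    then show ?thesis by (intro exI[of _ "[]"] exI[of _ \<beta>]) simp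
  next
    case False
    then obtain d where d: "d \<in> \<Delta>" "refl d \<beta> \<in> P" "height (refl d \<beta>) < height \<beta>"
      using pos_root_height_descent less.prems by blast
    then have "{\<gamma>\<in>\<Phi>. height \<gamma> < height (refl d \<beta>)} \<subset> {\<gamma>\<in>\<Phi>. height \<gamma> < height \<beta>}"
      using pos_root by auto
    then have "card {\<gamma>\<in>\<Phi>. height \<gamma> < height (refl d \<beta>)} < card {\<gamma>\<in>\<Phi>. height \<gamma> < height \<beta>}"
      using finite_roots by (intro psubset_card_mono) auto
    then obtain ds e where "set ds \<subseteq> \<Delta>" "e \<in> \<Delta>" "refl d \<beta> = wprod ds e"
      using less.hyps d(2) by blast
    moreover have "\<beta> = refl d (refl d \<beta>)"
      using refl_refl[OF root_nonzero[OF simple_root[OF d(1)]]] by simp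
    ultimately show ?thesis using d(1) by (intro exI[of _ "d # ds"] exI[of _ e]) auto
  qed
qed

lemma refl_eq_wprod: "\<alpha> \<in> \<Phi> \<Longrightarrow> \<exists>ds. set ds \<subseteq> \<Delta> \<and> refl \<alpha> = wprod ds"
proof -
  have pos: "\<exists>ds. set ds \<subseteq> \<Delta> \<and> refl \<beta> = wprod ds" if \<beta>: "\<beta> \<in> P" for \<beta>
  proof -
    obtain ds d where ds: "set ds \<subseteq> \<Delta>" "d \<in> \<Delta>" "\<beta> = wprod ds d"
      using pos_root_conjugate_simple[OF \<beta>] by blast
    have "refl \<beta> y = wprod (ds @ d # rev ds) y" for y
    proof -
      have "refl \<beta> y = refl (wprod ds d) (wprod ds (wprod (rev ds) y))"
        using ds(3) wprod_rev_inverse[OF ds(1)] by simp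
      also have "\<dots> = wprod ds (refl d (wprod (rev ds) y))"
        using refl_conjugate weyl_linear weyl_inner wprod_in_weyl_group[OF ds(1)] by blast
      finally show ?thesis by (simp add: wprod_append)
    qed
    then show ?thesis using ds by (intro exI[of _ "ds @ d # rev ds"]) auto
  qed
  assume "\<alpha> \<in> \<Phi>"
  then show ?thesis
    using pos[of \<alpha>] pos[of "- \<alpha>"] uminus_pos_root refl_uminus by metis
qed

lemma weyl_group_eq_wprod: "w \<in> W \<Longrightarrow> \<exists>ds. set ds \<subseteq> \<Delta> \<and> w = wprod ds"
proof (induction rule: weyl_group.induct)
  case id
  then show ?case by (intro exI[of _ "[]"]) simp
next
  case (step \<alpha> w)
  then obtain xs ys where "set xs \<subseteq> \<Delta>" "refl \<alpha> = wprod xs" "set ys \<subseteq> \<Delta>" "w = wprod ys"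
    using refl_eq_wprod by blast
  then show ?case by (intro exI[of _ "xs @ ys"]) (simp add: wprod_append)
qed

lemma weyl_reduced_word: "w \<in> W \<Longrightarrow> \<exists>ds. set ds \<subseteq> \<Delta> \<and> length ds = wlen \<Delta> w \<and> w = wprod ds"
  using weyl_group_eq_wprod reduced_word_exists by blast

lemma wlen_eq_n_inversions: "w \<in> W \<Longrightarrow> wlen \<Delta> w = n_inversions w"
  using weyl_reduced_word n_inversions_reduced_word by metis

lemma wlen_comp_le: "u \<in> W \<Longrightarrow> v \<in> W \<Longrightarrow> wlen \<Delta> (u \<circ> v) \<le> wlen \<Delta> u + wlen \<Delta> v"
proof -
  assume "u \<in> W" "v \<in> W"
  then obtain xs ys where "set xs \<subseteq> \<Delta>" "length xs = wlen \<Delta> u" "u = wprod xs"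
    and "set ys \<subseteq> \<Delta>" "length ys = wlen \<Delta> v" "v = wprod ys"
    using weyl_reduced_word by meson
  then show ?thesis using wlen_le_length[of "xs @ ys" \<Delta>] by (simp add: wprod_append)
qed

lemma weyl_pos_on_span:
  assumes w: "w \<in> W" and S: "\<forall>d\<in>S. w d \<in> P"
    and \<beta>: "\<beta> \<in> P" "\<forall>e\<in>\<Delta> - S. coord e \<beta> = 0"
  shows "w \<beta> \<in> P"
proof -
  have "coord f (w \<beta>) \<ge> 0" if f: "f \<in> \<Delta>" for f
  proof -
    have "coord f (w \<beta>) = (\<Sum>e\<in>\<Delta>. coord e \<beta> * coord f (w e))"
      by (subst coord_expansion[of \<beta>])
        (simp add: linear_sum[OF weyl_linear[OF w]] linear_scale[OF weyl_linear[OF w]]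
          linear_sum[OF coord_linear] coord_scale)
    also have "\<dots> \<ge> 0"
    proof (rule sum_nonneg)
      fix e assume e: "e \<in> \<Delta>"
      show "0 \<le> coord e \<beta> * coord f (w e)"
      proof (cases "e \<in> S")
        case True
        then show ?thesis using S \<beta>(1) e f by (simp add: pos_roots_iff)
      next
        case False
        then show ?thesis using \<beta>(2) e by simp
      qed
    qed
    finally show ?thesis .
  qed
  then show ?thesis using weyl_root[OF w pos_root[OF \<beta>(1)]] by (simp add: pos_roots_iff)
qed

lemma weyl_simple_pos_eq_id:
  assumes w: "w \<in> W" and pos: "\<forall>d\<in>\<Delta>. w d \<in> P"
  shows "w = id"
proof -
  obtain ds where ds: "set ds \<subseteq> \<Delta>" "length ds = wlen \<Delta> w" "w = wprod ds"
    using weyl_reduced_word[OF w] by blast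
  have "inversions w = {}"
    using weyl_pos_on_span[OF w pos] by (auto simp: inversions_def)
  then have "length ds = 0"
    using n_inversions_reduced_word[OF ds(1)] ds by (simp add: n_inversions_def)
  then show ?thesis using ds(3) by simp
qed

end

section \<open>Dominant vectors and the sets \<open>X\<^sub>I\<close>\<close>

definition dominant :: "'a::euclidean_space set \<Rightarrow> 'a \<Rightarrow> bool" where
  "dominant \<Delta> v \<longleftrightarrow> (\<forall>d\<in>\<Delta>. 0 \<le> v \<bullet> d)"

context based_root_system
begin

lemma dominant_inner_nonneg: "dominant \<Delta> v \<Longrightarrow> \<forall>e\<in>\<Delta>. 0 \<le> coord e x \<Longrightarrow> 0 \<le> v \<bullet> x"
  unfolding inner_coord_expansion[of v x] dominant_def by (intro sum_nonneg) simp

lemma dominant_inner_neg_root: "dominant \<Delta> v \<Longrightarrow> \<beta> \<in> \<Phi> \<Longrightarrow> \<beta> \<notin> P \<Longrightarrow> \<beta> \<bullet> v \<le> 0"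
  using dominant_inner_nonneg[of v "- \<beta>"] uminus_pos_root[of \<beta>]
  by (simp add: pos_roots_iff inner_commute)

lemma highest_root_dominant:
  assumes h: "highest_root \<Phi> \<Delta> h"
  shows "dominant \<Delta> h"
  unfolding dominant_def
proof (intro ballI)
  fix d assume d: "d \<in> \<Delta>"
  have "refl d h \<in> \<Phi>" using h d refl_root simple_root by (auto simp: highest_root_def)
  then have "0 \<le> coord d (h - refl d h)"
    using h d by (auto simp: highest_root_def nonneg_comb_iff_coord)
  also have "coord d (h - refl d h) = 2 * (h \<bullet> d) / (d \<bullet> d)"
    using d by (simp add: refl_def coord_scale coord_simple)
  finally show "0 \<le> h \<bullet> d"
    using root_inner_self_pos[OF simple_root[OF d]] by (simp add: zero_le_divide_iff)
qed

lemma pos_roots_I_iff: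
  "\<beta> \<in> pos_roots_I \<Phi> \<Delta> v \<longleftrightarrow> \<beta> \<in> P \<and> (\<forall>e\<in>\<Delta> - I_tilde \<Delta> v. coord e \<beta> = 0)"
proof
  assume "\<beta> \<in> pos_roots_I \<Phi> \<Delta> v"
  then have \<beta>: "\<beta> \<in> P" "\<beta> \<in> span (I_tilde \<Delta> v)" by (auto simp: pos_roots_I_def)
  have "coord e \<beta> = 0" if "e \<in> \<Delta> - I_tilde \<Delta> v" for e
    by (rule linear_eq_0_on_span[OF coord_linear _ \<beta>(2)])
      (use that in \<open>auto simp: coord_simple I_tilde_def\<close>)
  with \<beta> show "\<beta> \<in> P \<and> (\<forall>e\<in>\<Delta> - I_tilde \<Delta> v. coord e \<beta> = 0)" by blast
next
  assume \<beta>: "\<beta> \<in> P \<and> (\<forall>e\<in>\<Delta> - I_tilde \<Delta> v. coord e \<beta> = 0)"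
  have "(\<Sum>e\<in>\<Delta>. coord e \<beta> *\<^sub>R e) \<in> span (I_tilde \<Delta> v)"
  proof (rule span_sum)
    fix e assume "e \<in> \<Delta>"
    then show "coord e \<beta> *\<^sub>R e \<in> span (I_tilde \<Delta> v)"
      using \<beta> by (cases "e \<in> I_tilde \<Delta> v") (auto intro: span_base span_scale span_zero)
  qed
  then show "\<beta> \<in> pos_roots_I \<Phi> \<Delta> v"
    using \<beta> coord_expansion[of \<beta>] by (simp add: pos_roots_I_def)
qed

lemma pos_roots_I_orthogonal: "\<beta> \<in> pos_roots_I \<Phi> \<Delta> v \<Longrightarrow> v \<bullet> \<beta> = 0"
  using orthogonal_to_span[of \<beta> "I_tilde \<Delta> v" v]
  by (auto simp: pos_roots_I_def I_tilde_def orthogonal_def)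

lemma dominant_orthogonal_root_coord:
  assumes v: "dominant \<Delta> v" and \<gamma>: "\<gamma> \<in> \<Phi>" "\<gamma> \<bullet> v = 0" and e: "e \<in> \<Delta> - I_tilde \<Delta> v"
  shows "coord e \<gamma> = 0"
proof -
  have sum: "(\<Sum>e\<in>\<Delta>. coord e \<gamma> * (v \<bullet> e)) = 0"
    using inner_coord_expansion[of v \<gamma>] \<gamma>(2) by (simp add: inner_commute)
  text \<open>All terms of the sum have the sign of the root \<open>\<gamma>\<close>, so each of them vanishes.\<close>
  have "coord e \<gamma> * (v \<bullet> e) = 0"
  proof (cases "\<forall>e\<in>\<Delta>. coord e \<gamma> \<ge> 0")
    case True
    then show ?thesis
      using sum e v finite_simple by (subst (asm) sum_nonneg_eq_0_iff) (auto simp: dominant_def)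
  next
    case False
    then have "\<forall>e\<in>\<Delta>. coord e \<gamma> \<le> 0" using root_coord_sign[OF \<gamma>(1)] by blast
    moreover have "(\<Sum>e\<in>\<Delta>. - (coord e \<gamma> * (v \<bullet> e))) = 0" using sum by (simp add: sum_negf)
    ultimately show ?thesis
      using e v finite_simple
      by (subst (asm) sum_nonneg_eq_0_iff) (auto simp: dominant_def mult_nonpos_nonneg)
  qed
  then show ?thesis using e by (auto simp: I_tilde_def)
qed

lemma X_I_iff: "w \<in> X_I \<Phi> \<Delta> v \<longleftrightarrow> w \<in> W \<and> (\<forall>\<beta>\<in>pos_roots_I \<Phi> \<Delta> v. w \<beta> \<in> P)"
  by (auto simp: X_I_def)

lemma stabiliser_simple_neg:
  assumes u: "u \<in> W" "u v = v" "u \<noteq> id" and v: "dominant \<Delta> v"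
  shows "\<exists>d\<in>I_tilde \<Delta> v. u d \<notin> P"
proof -
  obtain d where d: "d \<in> \<Delta>" "u d \<notin> P" using weyl_simple_pos_eq_id[OF u(1)] u(3) by blast
  have "v \<bullet> d = u d \<bullet> v" using weyl_inner[OF u(1), of v d] u(2) by (simp add: inner_commute)
  also have "\<dots> \<le> 0" using dominant_inner_neg_root[OF v weyl_root[OF u(1) simple_root] d(2)] d(1) .
  finally have "v \<bullet> d = 0" using v d(1) by (simp add: dominant_def antisym)
  then show ?thesis using d by (auto simp: I_tilde_def)
qed

text \<open>If \<open>w\<^sub>2 = w\<^sub>1 \<circ> u\<close> with \<open>u\<close> fixing \<open>v\<close> nontrivially, a simple root \<open>d\<close> orthogonal
  to \<open>v\<close> with \<open>u d < 0\<close> gives the positive roots \<open>d\<close> and \<open>- u d\<close> of the parabolic subsystem,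
  which \<open>w\<^sub>2\<close> and \<open>w\<^sub>1\<close> map to \<open>w\<^sub>2 d\<close> and its negative.\<close>

lemma X_I_unique:
  assumes w1: "w1 \<in> X_I \<Phi> \<Delta> v" and w2: "w2 \<in> X_I \<Phi> \<Delta> v" and eq: "w1 v = w2 v"
    and v: "dominant \<Delta> v"
  shows "w1 = w2"
proof (rule ccontr)
  assume ne: "w1 \<noteq> w2"
  have w1W: "w1 \<in> W" and w2W: "w2 \<in> W" using w1 w2 by (auto simp: X_I_iff)
  obtain \<xi> where \<xi>: "\<xi> \<in> W" "\<forall>x. \<xi> (w1 x) = x" "\<forall>x. w1 (\<xi> x) = x"
    using weyl_inverse[OF w1W] by blast
  define u where "u = \<xi> \<circ> w2"
  have w2_eq: "w2 = w1 \<circ> u" using \<xi>(3) by (simp add: u_def fun_eq_iff)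
  have uW: "u \<in> W" using weyl_comp[OF \<xi>(1) w2W] by (simp add: u_def)
  have uv: "u v = v" using \<xi>(2) by (simp add: u_def eq[symmetric])
  have "u \<noteq> id" using ne w2_eq by auto
  then obtain d where d: "d \<in> I_tilde \<Delta> v" "u d \<notin> P"
    using stabiliser_simple_neg[OF uW uv _ v] by blast
  have d_simple: "d \<in> \<Delta>" and vd: "v \<bullet> d = 0" using d(1) by (auto simp: I_tilde_def)
  have ud: "u d \<in> \<Phi>" using weyl_root[OF uW simple_root[OF d_simple]] .
  have "d \<in> pos_roots_I \<Phi> \<Delta> v"
    using d(1) d_simple simple_pos_root by (auto simp: pos_roots_I_iff coord_simple)
  then have pos2: "w2 d \<in> P" using w2 by (simp add: X_I_iff)
  have "- u d \<bullet> v = 0" using weyl_inner[OF uW, of d v] uv vd by (simp add: inner_commute)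
  then have "- u d \<in> pos_roots_I \<Phi> \<Delta> v"
    unfolding pos_roots_I_iff
    using dominant_orthogonal_root_coord[OF v uminus_root[OF ud]] uminus_pos_root[OF ud d(2)]
    by blast
  then have "w1 (- u d) \<in> P" using w1 by (simp add: X_I_iff)
  moreover have "w1 (- u d) = - w2 d" using weyl_uminus[OF w1W] w2_eq by simp
  ultimately show False using uminus_not_pos_root[OF pos2] by simp
qed

lemma x_root_eqI:
  assumes "dominant \<Delta> v" "w \<in> X_I \<Phi> \<Delta> v" "w v = \<beta>"
  shows "x_root \<Phi> \<Delta> v \<beta> = w"
  unfolding x_root_def
proof (rule the_equality)
  show "w \<in> X_I \<Phi> \<Delta> v \<and> w v = \<beta>" using assms(2,3) ..
  fix w' assume "w' \<in> X_I \<Phi> \<Delta> v \<and> w' v = \<beta>"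
  then show "w' = w" using X_I_unique[of w' v w] assms by auto
qed

lemma exists_dominant_conjugate:
  assumes \<alpha>: "\<alpha> \<in> \<Phi>"
  shows "\<exists>w\<in>W. dominant \<Delta> (w \<alpha>)"
proof -
  define orbit where "orbit = (\<lambda>w. w \<alpha>) ` W"
  have "orbit \<subseteq> \<Phi>" using weyl_root[OF _ \<alpha>] by (auto simp: orbit_def)
  then have "finite orbit" using finite_subset finite_roots by blast
  moreover have "\<alpha> \<in> orbit" unfolding orbit_def using weyl_group.id by (metis id_apply image_eqI)
  ultimately have "Max (height ` orbit) \<in> height ` orbit" by (intro Max_in) auto
  then obtain \<beta> where \<beta>: "\<beta> \<in> orbit" "height \<beta> = Max (height ` orbit)" by (metis imageE)
  have max: "height \<gamma> \<le> height \<beta>" if "\<gamma> \<in> orbit" for \<gamma>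
    unfolding \<beta>(2) using \<open>finite orbit\<close> that by (intro Max_ge) auto
  obtain w where w: "w \<in> W" "\<beta> = w \<alpha>" using \<beta>(1) by (auto simp: orbit_def)
  text \<open>Reflecting in a simple root \<open>d\<close> with \<open>\<beta> \<bullet> d < 0\<close> would raise the height within the
    orbit.\<close>
  have "0 \<le> \<beta> \<bullet> d" if d: "d \<in> \<Delta>" for d
  proof (rule ccontr)
    assume "\<not> 0 \<le> \<beta> \<bullet> d"
    then have "height \<beta> < height (refl d \<beta>)"
      using root_inner_self_pos[OF simple_root[OF d]] by (simp add: height_simple_refl[OF d] divide_neg_pos)
    moreover have "refl d \<beta> \<in> orbit"
      unfolding orbit_def w(2) using weyl_group.step[OF simple_root[OF d] w(1)]
      by (rule image_eqI[rotated]) simp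
    ultimately show False using max by force
  qed
  then show ?thesis using w by (auto simp: dominant_def)
qed

lemma dominant_long_root_eq_highest:
  assumes h: "highest_root \<Phi> \<Delta> h" and \<beta>: "\<beta> \<in> \<Phi>" "dominant \<Delta> \<beta>" "h \<bullet> h \<le> \<beta> \<bullet> \<beta>"
  shows "\<beta> = h"
proof -
  have c: "\<forall>e\<in>\<Delta>. 0 \<le> coord e (h - \<beta>)"
    using h \<beta>(1) by (simp add: highest_root_def nonneg_comb_iff_coord)
  have "0 \<le> h \<bullet> (h - \<beta>)" "0 \<le> \<beta> \<bullet> (h - \<beta>)"
    using dominant_inner_nonneg[OF highest_root_dominant[OF h] c] dominant_inner_nonneg[OF \<beta>(2) c] .
  then have "(h - \<beta>) \<bullet> (h - \<beta>) = 0"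
    using \<beta>(3) by (simp add: inner_diff_left inner_diff_right inner_commute)
  then show ?thesis by simp
qed

lemma X_I_if_min_n_inversions:
  assumes u: "u \<in> W" and min: "\<forall>y\<in>W. y v = u v \<longrightarrow> n_inversions u \<le> n_inversions y"
  shows "u \<in> X_I \<Phi> \<Delta> v"
proof (rule ccontr)
  assume "u \<notin> X_I \<Phi> \<Delta> v"
  then obtain \<beta> where "\<beta> \<in> pos_roots_I \<Phi> \<Delta> v" "u \<beta> \<notin> P" using u by (auto simp: X_I_iff)
  then obtain d where d: "d \<in> I_tilde \<Delta> v" "u d \<notin> P"
    using weyl_pos_on_span[OF u, of "I_tilde \<Delta> v" \<beta>] by (auto simp: pos_roots_I_iff)
  have d_simple: "d \<in> \<Delta>" and "v \<bullet> d = 0" using d(1) by (auto simp: I_tilde_def)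
  then have "(u \<circ> refl d) v = u v" by (simp add: refl_orthogonal)
  moreover have "u \<circ> refl d \<in> W" using weyl_comp[OF u refl_in_weyl_group[OF simple_root[OF d_simple]]] .
  ultimately have "n_inversions u \<le> n_inversions (u \<circ> refl d)" using min by blast
  then show False
    using n_inversions_comp_simple_refl[OF u d_simple] n_inversions_pos[OF u d_simple d(2)] d(2)
    by simp
qed

text \<open>A long root is conjugate to the highest root; among all \<open>u\<close> with \<open>u h = \<alpha>\<close> one with the
  fewest inversions lies in \<open>X_I\<close>.\<close>

lemma X_I_exists:
  assumes h: "highest_root \<Phi> \<Delta> h" and \<alpha>: "long_root \<Phi> \<alpha>"
  shows "\<exists>u\<in>X_I \<Phi> \<Delta> h. u h = \<alpha>"
proof -
  have \<alpha>_root: "\<alpha> \<in> \<Phi>" and long: "\<forall>\<gamma>\<in>\<Phi>. \<gamma> \<bullet> \<gamma> \<le> \<alpha> \<bullet> \<alpha>"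
    using \<alpha> by (auto simp: long_root_def)
  obtain w where w: "w \<in> W" "dominant \<Delta> (w \<alpha>)" using exists_dominant_conjugate[OF \<alpha>_root] by blast
  have "w \<alpha> = h"
    using dominant_long_root_eq_highest[OF h weyl_root[OF w(1) \<alpha>_root] w(2)] long h weyl_inner[OF w(1)]
    by (simp add: highest_root_def)
  moreover obtain \<xi> where "\<xi> \<in> W" "\<forall>x. \<xi> (w x) = x" using weyl_inverse[OF w(1)] by blast
  ultimately have "\<exists>u. u \<in> W \<and> u h = \<alpha>" by metis
  then obtain u where u: "u \<in> W \<and> u h = \<alpha>"
    and min: "\<forall>y. y \<in> W \<and> y h = \<alpha> \<longrightarrow> n_inversions u \<le> n_inversions y"
    using ex_has_least_nat[of "\<lambda>u. u \<in> W \<and> u h = \<alpha>" _ n_inversions] by blast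
  then show ?thesis using X_I_if_min_n_inversions[of u h] by auto
qed

lemma x_root_spec:
  assumes "highest_root \<Phi> \<Delta> h" "long_root \<Phi> \<alpha>"
  shows "x_root \<Phi> \<Delta> h \<alpha> \<in> X_I \<Phi> \<Delta> h \<and> x_root \<Phi> \<Delta> h \<alpha> h = \<alpha>"
  using X_I_exists[OF assms] x_root_eqI[OF highest_root_dominant[OF assms(1)]] by metis

lemma refl_comp_X_I:
  assumes x: "x \<in> X_I \<Phi> \<Delta> v" "x v = \<alpha>" and \<alpha>: "\<alpha> \<in> \<Phi>"
  shows "refl \<alpha> \<circ> x \<in> X_I \<Phi> \<Delta> v"
  unfolding X_I_iff
proof (intro conjI ballI)
  have xW: "x \<in> W" using x(1) by (simp add: X_I_iff)
  then show "refl \<alpha> \<circ> x \<in> W" by (rule weyl_group.step[OF \<alpha>])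
  fix \<beta> assume \<beta>: "\<beta> \<in> pos_roots_I \<Phi> \<Delta> v"
  then have "x \<beta> \<bullet> \<alpha> = 0"
    using pos_roots_I_orthogonal weyl_inner[OF xW, of \<beta> v] x(2) by (simp add: inner_commute)
  then show "(refl \<alpha> \<circ> x) \<beta> \<in> P"
    using x(1) \<beta> by (simp add: refl_orthogonal X_I_iff)
qed

lemma refl_pos_root_neg_inner_pos:
  assumes \<alpha>: "\<alpha> \<in> P" and \<gamma>: "\<gamma> \<in> P" "refl \<alpha> \<gamma> \<notin> P"
  shows "0 < \<gamma> \<bullet> \<alpha>"
proof (rule ccontr)
  assume "\<not> 0 < \<gamma> \<bullet> \<alpha>"
  then have c: "2 * (\<gamma> \<bullet> \<alpha>) / (\<alpha> \<bullet> \<alpha>) \<le> 0"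
    using root_inner_self_pos[OF pos_root[OF \<alpha>]] by (simp add: divide_nonpos_pos)
  have "0 \<le> coord e (refl \<alpha> \<gamma>)" if e: "e \<in> \<Delta>" for e
  proof -
    have "coord e (refl \<alpha> \<gamma>) = coord e \<gamma> - 2 * (\<gamma> \<bullet> \<alpha>) / (\<alpha> \<bullet> \<alpha>) * coord e \<alpha>"
      by (simp add: refl_def coord_diff coord_scale)
    moreover have "0 \<le> coord e \<gamma>" "0 \<le> coord e \<alpha>" using \<alpha> \<gamma> e by (auto simp: pos_roots_iff)
    ultimately show ?thesis using mult_nonpos_nonneg[OF c] by fastforce
  qed
  then have "refl \<alpha> \<gamma> \<in> P"
    using refl_root[OF pos_root[OF \<alpha>] pos_root[OF \<gamma>(1)]] by (simp add: pos_roots_iff)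
  then show False using \<gamma>(2) by simp
qed

lemma inverse_pos_if_refl_neg:
  assumes x: "x \<in> W" "x v = \<alpha>" and v: "dominant \<Delta> v" and \<alpha>: "\<alpha> \<in> P"
    and \<xi>: "\<xi> \<in> W" "\<forall>y. x (\<xi> y) = y"
    and \<gamma>: "\<gamma> \<in> P" "refl \<alpha> \<gamma> \<notin> P"
  shows "\<xi> \<gamma> \<in> P"
proof (rule ccontr)
  assume neg: "\<xi> \<gamma> \<notin> P"
  have "\<xi> \<gamma> \<bullet> v = \<gamma> \<bullet> \<alpha>" using weyl_inner[OF x(1), of "\<xi> \<gamma>" v] x(2) \<xi>(2) by simp
  then have "0 < \<xi> \<gamma> \<bullet> v" using refl_pos_root_neg_inner_pos[OF \<alpha> \<gamma>] by simp
  then show False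
    using dominant_inner_neg_root[OF v weyl_root[OF \<xi>(1) pos_root[OF \<gamma>(1)]] neg] by simp
qed

lemma n_inversions_refl_comp_ge:
  assumes x: "x \<in> W" "x v = \<alpha>" and v: "dominant \<Delta> v" and \<alpha>: "\<alpha> \<in> P"
  shows "n_inversions x + n_inversions (refl \<alpha>) \<le> n_inversions (refl \<alpha> \<circ> x)"
proof -
  obtain \<xi> where \<xi>: "\<xi> \<in> W" "\<forall>y. \<xi> (x y) = y" "\<forall>y. x (\<xi> y) = y"
    using weyl_inverse[OF x(1)] by blast
  note \<xi>_pos = inverse_pos_if_refl_neg[OF x v \<alpha> \<xi>(1,3)]
  have sub_x: "inversions x \<subseteq> inversions (refl \<alpha> \<circ> x)"
  proof
    fix \<beta> assume "\<beta> \<in> inversions x"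
    then have \<beta>: "\<beta> \<in> P" "- x \<beta> \<in> P"
      using weyl_pos_or_neg[OF x(1) pos_root] by (auto simp: inversions_def)
    have "refl \<alpha> (x \<beta>) \<notin> P"
    proof
      assume "refl \<alpha> (x \<beta>) \<in> P"
      then have "refl \<alpha> (- x \<beta>) \<notin> P"
        using uminus_not_pos_root linear_neg[OF refl_linear] by metis
      then have "\<xi> (- x \<beta>) \<in> P" using \<xi>_pos[OF \<beta>(2)] by blast
      then show False using weyl_uminus[OF \<xi>(1)] \<xi>(2) uminus_not_pos_root[OF \<beta>(1)] by simp
    qed
    then show "\<beta> \<in> inversions (refl \<alpha> \<circ> x)" using \<beta>(1) by (simp add: inversions_def)
  qed
  have sub_refl: "\<xi> ` inversions (refl \<alpha>) \<subseteq> inversions (refl \<alpha> \<circ> x)"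
    using \<xi>_pos \<xi>(3) by (auto simp: inversions_def)
  have disjoint: "inversions x \<inter> \<xi> ` inversions (refl \<alpha>) = {}"
    using \<xi>(3) by (auto simp: inversions_def)
  have "inj_on \<xi> (inversions (refl \<alpha>))" by (metis \<xi>(3) inj_onI)
  then have "n_inversions x + n_inversions (refl \<alpha>) = card (inversions x \<union> \<xi> ` inversions (refl \<alpha>))"
    unfolding n_inversions_def using disjoint finite_inversions
    by (simp add: card_Un_disjoint card_image)
  also have "\<dots> \<le> n_inversions (refl \<alpha> \<circ> x)"
    unfolding n_inversions_def using sub_x sub_refl finite_inversions by (intro card_mono) auto
  finally show ?thesis .
qed

end

theorem proposition1p7:
  fixes \<Phi> \<Delta> :: "'a::euclidean_space set" and h \<alpha> :: 'a
  assumes "root_system \<Phi>" and "reduced \<Phi>" and "irreducible_rs \<Phi>"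
    and "root_basis \<Phi> \<Delta>" and "highest_root \<Phi> \<Delta> h"
    and "\<alpha> \<in> pos_roots \<Phi> \<Delta>" and "long_root \<Phi> \<alpha>"
  shows "x_root \<Phi> \<Delta> h (- \<alpha>) = refl \<alpha> \<circ> x_root \<Phi> \<Delta> h \<alpha> \<and>
         wlen \<Delta> (x_root \<Phi> \<Delta> h (- \<alpha>)) = wlen \<Delta> (refl \<alpha> \<circ> x_root \<Phi> \<Delta> h \<alpha>) \<and>
         wlen \<Delta> (refl \<alpha> \<circ> x_root \<Phi> \<Delta> h \<alpha>) = wlen \<Delta> (refl \<alpha>) + wlen \<Delta> (x_root \<Phi> \<Delta> h \<alpha>)"
proof -
  interpret based_root_system \<Phi> \<Delta>
    using assms(1,2,4) by unfold_locales
  define x where "x = x_root \<Phi> \<Delta> h \<alpha>"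
  have dom: "dominant \<Delta> h" using highest_root_dominant[OF assms(5)] .
  have \<alpha>: "\<alpha> \<in> \<Phi>" using assms(6) by (rule pos_root)
  have x: "x \<in> X_I \<Phi> \<Delta> h" "x h = \<alpha>" using x_root_spec[OF assms(5,7)] by (auto simp: x_def)
  then have xW: "x \<in> W" by (simp add: X_I_iff)
  have "x_root \<Phi> \<Delta> h (- \<alpha>) = refl \<alpha> \<circ> x"
    using x_root_eqI[OF dom refl_comp_X_I[OF x \<alpha>]] x(2) refl_self[OF root_nonzero[OF \<alpha>]] by simp
  moreover have "wlen \<Delta> (refl \<alpha> \<circ> x) = wlen \<Delta> (refl \<alpha>) + wlen \<Delta> x"
    using wlen_comp_le[OF refl_in_weyl_group[OF \<alpha>] xW]
      n_inversions_refl_comp_ge[OF xW x(2) dom assms(6)]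
      wlen_eq_n_inversions[OF xW] wlen_eq_n_inversions[OF refl_in_weyl_group[OF \<alpha>]]
      wlen_eq_n_inversions[OF weyl_group.step[OF \<alpha> xW]]
    by simp
  ultimately show ?thesis by (simp add: x_def)
qed

end
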